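(* Suppose Assumptions A1 and A4 (stated in the context) hold, let $w^*,w_k\in\mathbb{R}^d$ and $\gamma>0$, and let $H_k^{(r)}$ be the exact rank-$r$ truncated spectral decomposition of $\nabla^2F_{S_k}(w_k)$. Then $$\mathbb{E}_k\big\|\big([H_k^{(r)}+\gamma I]-\nabla^2\overline{F}(w_k)\big)(w_k-w^* )\big\|\le\Big[\overline{|\lambda_{r+1}^{(k)}|}+\gamma+\frac{\sigma}{\sqrt{N_{S_k}}}\Big]\|w_k-w^*\|,$$ where $\overline{|\lambda_{r+1}^{(k)}|}=\mathbb{E}_k[|\lambda_{r+1}^{(k)}|]$.
   Context: Data pairs $(x,y)$ are distributed according to $\nu$; $\ell(w;x,y)$ is a smooth loss, $w\in\mathbb{R}^d$, $F(w)=\int\ell(w;x,y)\,d\nu$. For $(x_i,y_i)\sim\nu$, $F_i(w)=\ell(w;x_i,y_i)$; for a finite sample $S$, $N_S=|S|$ and $F_S=\frac1{N_S}\sum_{i\in S}F_i$. With $\gamma>0$, $\overline{F}(w)=F(w)+\frac\gamma2\|w\|^2$. At iteration $k$ a Hessian sample $S_k$ is drawn at random; $\mathbb{E}_k$ is the conditional expectation at iteration $k$ over all possible sample batches. $\lambda_1^{(k)},\dots,\lambda_d^{(k)}$ are the eigenvalues of $\nabla^2F_{S_k}(w_k)$ ordered by nonincreasing absolute value with orthonormal eigenvectors $u_i^{(k)}$, and $H_k^{(r)}=\sum_{i=1}^r\lambda_i^{(k)}u_i^{(k)}u_i^{(k)T}$. Norms are Euclidean/spectral; $A\preceq B$ means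 $B-A$ is positive semidefinite. (A1) $F$ is twice continuously differentiable and for every sample $S$ with $|S|=N_S$ there is a positive constant $L_{N_S}<L$ with $\nabla^2F_S(w)\preceq L_{N_S}I$; moreover the first $r$ eigenvalues of $\nabla^2F_S(w)$ evaluated along the path of iterates starting at $w_0$ are positive. (A4) There is $\sigma$ with $\|\mathbb{E}[(\nabla^2F_i(w)-\nabla^2F(w))^2]\|\le\sigma^2$ for all $w$. *)

theory Defs
  imports "HOL-Probability.Probability"
begin

definition hessian_at :: "(real^'n \<Rightarrow> real) \<Rightarrow> real^'n \<Rightarrow> real^'n^'n \<Rightarrow> bool" where
  "hessian_at f w H \<longleftrightarrow>
     (\<exists>g. (\<forall>u. (f has_derivative (\<lambda>h. g u \<bullet> h)) (at u)) \<and>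
          (g has_derivative (\<lambda>h. H *v h)) (at w))"

definition loewner_le :: "real^'n^'n \<Rightarrow> real^'n^'n \<Rightarrow> bool" where
  "loewner_le A B \<longleftrightarrow> (\<forall>x. 0 \<le> x \<bullet> ((B - A) *v x))"

definition spec_norm :: "real^'n^'n \<Rightarrow> real" where
  "spec_norm A = onorm (\<lambda>x. A *v x)"

definition outer :: "real^'n \<Rightarrow> real^'n^'n" where
  "outer u = (\<chi> a b. u $ a * u $ b)"

text \<open>lam 0, ..., lam (d-1) are the eigenvalues of A (d = CARD('n)), ordered by
  nonincreasing absolute value, with orthonormal eigenvectors u 0, ..., u (d-1).
  (Index i here corresponds to index i+1 in the paper.)\<close>
definition ordered_eigendecomp :: "real^'n^'n \<Rightarrow> (nat \<Rightarrow> real) \<Rightarrow> (nat \<Rightarrow> real^'n) \<Rightarrow> bool" where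
  "ordered_eigendecomp A lam u \<longleftrightarrow>
     (\<forall>i<CARD('n). \<forall>j<CARD('n). u i \<bullet> u j = (if i = j then 1 else 0)) \<and>
     (\<forall>i<CARD('n). A *v u i = lam i *\<^sub>R u i) \<and>
     (\<forall>i j. i \<le> j \<and> j < CARD('n) \<longrightarrow> \<bar>lam j\<bar> \<le> \<bar>lam i\<bar>)"

definition trunc_spec :: "nat \<Rightarrow> (nat \<Rightarrow> real) \<Rightarrow> (nat \<Rightarrow> real^'n) \<Rightarrow> real^'n^'n" where
  "trunc_spec r lam u = (\<Sum>i<r. lam i *\<^sub>R outer (u i))"

definition sample_hess :: "('z \<Rightarrow> real^'n \<Rightarrow> real^'n^'n) \<Rightarrow> nat \<Rightarrow> (nat \<Rightarrow> 'z) \<Rightarrow> real^'n \<Rightarrow> real^'n^'n" where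
  "sample_hess hess n s w = (1 / real n) *\<^sub>R (\<Sum>i<n. hess (s i) w)"

end

theory Submission
  imports Defs
begin

(*
  Write v = w_k - w* and A = \<nabla>\<^sup>2F_S(w_k). The \<gamma> terms cancel, and
  (H^(r) - \<nabla>\<^sup>2F(w_k)) v = (H^(r) - A) v + (A - \<nabla>\<^sup>2F(w_k)) v.
  The first summand only contains the discarded eigencomponents, all of modulus at most
  |\<lambda>_(r+1)|, so its norm is at most |\<lambda>_(r+1)| |v|. The second is the average of the N
  i.i.d. mean-zero vectors D_i v with D_i = \<nabla>\<^sup>2F_i(w_k) - \<nabla>\<^sup>2F(w_k); independence
  kills the cross terms, so E|\<Sum> D_i v|\<^sup>2 = N E(v \<bullet> D\<^sup>2 v) \<le> N \<sigma>\<^sup>2 |v|\<^sup>2 by (A4) and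
  symmetry of D, and Jensen's inequality yields \<sigma> |v| / sqrt N.
  The eigenvalues are not assumed measurable in the sample: |\<lambda>_(r+1)| is integrable because
  it equals the spectral-norm distance from A to the matrices of rank at most r
  (Eckart-Young), a Lipschitz function of A.
*)

definition orthonormal_on :: "'i set \<Rightarrow> ('i \<Rightarrow> 'a::real_inner) \<Rightarrow> bool" where
  "orthonormal_on I u \<longleftrightarrow> (\<forall>i\<in>I. \<forall>j\<in>I. u i \<bullet> u j = (if i = j then 1 else 0))"

lemma norm_sum_orthonormal_sq:
  assumes "orthonormal_on I u" "J \<subseteq> I" "finite J"
  shows "(norm (\<Sum>i\<in>J. c i *\<^sub>R u i))\<^sup>2 = (\<Sum>i\<in>J. (c i)\<^sup>2)"
proof -
  have "(norm (\<Sum>i\<in>J. c i *\<^sub>R u i))\<^sup>2 = (\<Sum>i\<in>J. \<Sum>j\<in>J. c i * (c j * (u j \<bullet> u i)))"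
    by (simp add: power2_norm_eq_inner inner_sum_left inner_sum_right sum_distrib_left)
  also have "\<dots> = (\<Sum>i\<in>J. \<Sum>j\<in>J. if i = j then c i * c j else 0)"
    using assms(1,2) by (intro sum.cong refl) (auto simp: orthonormal_on_def subset_iff)
  also have "\<dots> = (\<Sum>i\<in>J. (c i)\<^sup>2)"
    using assms(3) by (simp add: power2_eq_square)
  finally show ?thesis .
qed

lemma orthonormal_on_inj_on: "orthonormal_on I u \<Longrightarrow> inj_on u I"
  unfolding orthonormal_on_def by (rule inj_onI) (metis one_neq_zero)

lemma orthonormal_on_independent:
  assumes "orthonormal_on I u"
  shows "independent (u ` I)"
proof (rule pairwise_orthogonal_independent)
  show "pairwise orthogonal (u ` I)"
    using assms unfolding orthonormal_on_def pairwise_def orthogonal_def by auto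
  show "0 \<notin> u ` I"
    using assms unfolding orthonormal_on_def by (metis image_iff inner_zero_left zero_neq_one)
qed

lemma orthonormal_expansion:
  fixes u :: "nat \<Rightarrow> 'a::euclidean_space"
  assumes on: "orthonormal_on {..<DIM('a)} u"
  shows "(\<Sum>i<DIM('a). (u i \<bullet> x) *\<^sub>R u i) = x"
proof -
  let ?B = "u ` {..<DIM('a)}"
  have inj: "inj_on u {..<DIM('a)}" by (rule orthonormal_on_inj_on[OF on])
  have "span ?B = UNIV"
    using orthonormal_on_independent[OF on] card_image[OF inj]
    by (intro card_ge_dim_independent[THEN antisym[OF subset_UNIV]]) auto
  then have "(\<Sum>b\<in>?B. (x \<bullet> b) *\<^sub>R b) = x"
    using on unfolding orthonormal_on_def
    by (intro orthonormal_basis_expand) (auto simp: pairwise_def orthogonal_def norm_eq_1)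
  then show ?thesis
    by (simp add: sum.reindex[OF inj] inner_commute)
qed

lemma norm_sq_orthonormal_coeffs:
  fixes u :: "nat \<Rightarrow> 'a::euclidean_space"
  assumes on: "orthonormal_on {..<DIM('a)} u"
  shows "(norm x)\<^sup>2 = (\<Sum>i<DIM('a). (u i \<bullet> x)\<^sup>2)"
  by (subst (1) orthonormal_expansion[OF on, of x, symmetric])
     (rule norm_sum_orthonormal_sq[OF on]; simp)

lemma outer_mult_vec: "outer u *v x = (u \<bullet> x) *\<^sub>R u"
  by (simp add: vec_eq_iff outer_def matrix_vector_mult_def inner_vec_def sum_distrib_left
      sum_distrib_right mult.commute mult.left_commute)

lemma bounded_linear_matrix_vector_mult_left: "bounded_linear (\<lambda>A::real^'n^'m. A *v x)"
  unfolding linear_conv_bounded_linear[symmetric]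
  by (rule linearI) (simp_all add: matrix_vector_mult_add_rdistrib scaleR_matrix_vector_assoc)

lemma trunc_spec_mult: "trunc_spec r lam u *v x = (\<Sum>i<r. (lam i * (u i \<bullet> x)) *\<^sub>R u i)"
  unfolding trunc_spec_def
  by (simp add: linear_sum[OF bounded_linear.linear[OF bounded_linear_matrix_vector_mult_left]]
      scaleR_matrix_vector_assoc[symmetric] outer_mult_vec)

lemma range_trunc_spec_subset: "range ((*v) (trunc_spec r lam u)) \<subseteq> span (u ` {..<r})"
  unfolding trunc_spec_mult by (auto intro: span_sum span_scale span_base)

lemma dim_range_trunc_spec: "dim (range ((*v) (trunc_spec r lam u))) \<le> r"
proof -
  have "dim (range ((*v) (trunc_spec r lam u))) \<le> card (u ` {..<r})"
    by (rule dim_le_card[OF range_trunc_spec_subset]) simp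
  also have "\<dots> \<le> r"
    using card_image_le[of "{..<r}" u] by simp
  finally show ?thesis .
qed

lemma spec_norm_triangle: "spec_norm (A + B) \<le> spec_norm A + spec_norm B"
  unfolding spec_norm_def matrix_vector_mult_add_rdistrib
  by (rule onorm_triangle) auto

lemma norm_matrix_vector_mult_le_spec_norm: "norm (A *v x) \<le> spec_norm A * norm x"
  unfolding spec_norm_def by (rule onorm) simp

lemma spec_norm_nonneg: "0 \<le> spec_norm A"
  unfolding spec_norm_def by (rule onorm_pos_le) simp

lemma spec_norm_le_norm: "spec_norm A \<le> real CARD('n) * real CARD('n) * norm A"
  for A :: "real^'n^'n"
  unfolding spec_norm_def
  by (rule onorm_le_matrix_component)
     (meson component_le_norm_cart Finite_Cartesian_Product.norm_nth_le order_trans)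

lemma ordered_eigendecomp_orthonormal:
  "ordered_eigendecomp A lam u \<Longrightarrow> orthonormal_on {..<CARD('n)} u" for A :: "real^'n^'n"
  unfolding ordered_eigendecomp_def orthonormal_on_def by blast

lemma ordered_eigendecomp_mult:
  fixes A :: "real^'n^'n"
  assumes eig: "ordered_eigendecomp A lam u"
  shows "A *v x = (\<Sum>i<CARD('n). (lam i * (u i \<bullet> x)) *\<^sub>R u i)"
proof -
  have "A *v x = A *v (\<Sum>i<CARD('n). (u i \<bullet> x) *\<^sub>R u i)"
    using orthonormal_expansion[of u x] ordered_eigendecomp_orthonormal[OF eig] by simp
  also have "\<dots> = (\<Sum>i<CARD('n). (lam i * (u i \<bullet> x)) *\<^sub>R u i)"
    using eig unfolding ordered_eigendecomp_def
    by (simp add: vec.sum matrix_vector_mult_scaleR mult.commute)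
  finally show ?thesis .
qed

lemma ordered_eigendecomp_symmetric:
  fixes A :: "real^'n^'n"
  assumes "ordered_eigendecomp A lam u"
  shows "x \<bullet> (A *v y) = y \<bullet> (A *v x)"
  unfolding ordered_eigendecomp_mult[OF assms] inner_sum_right
  by (simp add: inner_commute mult_ac)

lemma norm_trunc_spec_error:
  fixes A :: "real^'n^'n"
  assumes eig: "ordered_eigendecomp A lam u" and r: "r < CARD('n)"
  shows "norm ((trunc_spec r lam u - A) *v x) \<le> \<bar>lam r\<bar> * norm x"
proof -
  let ?d = "CARD('n)" and ?I = "{..<CARD('n)} - {..<r}"
  have on: "orthonormal_on {..<?d} u" by (rule ordered_eigendecomp_orthonormal[OF eig])
  have "(\<Sum>i<?d. (lam i * (u i \<bullet> x)) *\<^sub>R u i) =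
      (\<Sum>i\<in>?I. (lam i * (u i \<bullet> x)) *\<^sub>R u i) + (\<Sum>i<r. (lam i * (u i \<bullet> x)) *\<^sub>R u i)"
    using r by (intro sum.subset_diff) auto
  then have "(trunc_spec r lam u - A) *v x = - (\<Sum>i\<in>?I. (lam i * (u i \<bullet> x)) *\<^sub>R u i)"
    unfolding matrix_vector_mult_diff_rdistrib trunc_spec_mult ordered_eigendecomp_mult[OF eig]
    by simp
  then have "(norm ((trunc_spec r lam u - A) *v x))\<^sup>2 = (\<Sum>i\<in>?I. (lam i * (u i \<bullet> x))\<^sup>2)"
    by (simp only: norm_minus_cancel) (rule norm_sum_orthonormal_sq[OF on]; auto)
  also have "\<dots> \<le> (\<Sum>i\<in>?I. (lam r)\<^sup>2 * (u i \<bullet> x)\<^sup>2)"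
  proof (rule sum_mono)
    fix i assume "i \<in> ?I"
    then have "(lam i)\<^sup>2 \<le> (lam r)\<^sup>2"
      using eig unfolding ordered_eigendecomp_def by (auto simp: abs_le_square_iff)
    then show "(lam i * (u i \<bullet> x))\<^sup>2 \<le> (lam r)\<^sup>2 * (u i \<bullet> x)\<^sup>2"
      by (simp add: power_mult_distrib mult_right_mono)
  qed
  also have "\<dots> \<le> (\<Sum>i<?d. (lam r)\<^sup>2 * (u i \<bullet> x)\<^sup>2)"
    by (rule sum_mono2) auto
  also have "\<dots> = (\<bar>lam r\<bar> * norm x)\<^sup>2"
    using norm_sq_orthonormal_coeffs[of u x] on
    by (simp add: power_mult_distrib sum_distrib_left)
  finally show ?thesis
    by (rule power2_le_imp_le) simp
qed

lemma abs_ordered_eigenvalue_le_spec_norm_diff: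
  fixes A B :: "real^'n^'n"
  assumes eig: "ordered_eigendecomp A lam u" and r: "r < CARD('n)"
    and rank_B: "dim (range ((*v) B)) \<le> r"
  shows "\<bar>lam r\<bar> \<le> spec_norm (A - B)"
proof -
  \<comment> \<open>B kills some z \<noteq> 0 in the span of the top r + 1 eigenvectors, where A stretches
    by at least |lam r|.\<close>
  let ?d = "CARD('n)" and ?S = "span (u ` {..r})"
  have on: "orthonormal_on {..<?d} u" by (rule ordered_eigendecomp_orthonormal[OF eig])
  have on_r: "orthonormal_on {..r} u"
    using on r unfolding orthonormal_on_def by auto
  have "dim ?S = Suc r"
    using orthonormal_on_independent[OF on_r] orthonormal_on_inj_on[OF on_r]
    by (simp add: dim_eq_card_independent card_image)
  have "\<not> inj_on ((*v) B) ?S"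
  proof
    assume "inj_on ((*v) B) ?S"
    then have "dim ((*v) B ` ?S) = dim ?S"
      by (intro dim_image_eq) (auto simp: span_span)
    moreover have "dim ((*v) B ` ?S) \<le> dim (range ((*v) B))"
      by (rule dim_subset) auto
    ultimately show False
      using \<open>dim ?S = Suc r\<close> rank_B by simp
  qed
  then obtain z where zS: "z \<in> ?S" and z0: "z \<noteq> 0" and Bz: "B *v z = 0"
    unfolding inj_on_def
    by (metis eq_iff_diff_eq_0 matrix_vector_mult_diff_distrib span_diff)
  have coeff: "u i \<bullet> z = 0" if "r < i" "i < ?d" for i
  proof -
    have "orthogonal (u i) z"
      by (rule orthogonal_to_span[OF zS])
         (use on that r in \<open>auto simp: orthogonal_def orthonormal_on_def\<close>)
    then show ?thesis by (simp add: orthogonal_def)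
  qed
  have "(\<bar>lam r\<bar> * norm z)\<^sup>2 = (\<Sum>i<?d. (lam r)\<^sup>2 * (u i \<bullet> z)\<^sup>2)"
    using norm_sq_orthonormal_coeffs[of u z] on
    by (simp add: power_mult_distrib sum_distrib_left)
  also have "\<dots> \<le> (\<Sum>i<?d. (lam i * (u i \<bullet> z))\<^sup>2)"
  proof (rule sum_mono)
    fix i assume i: "i \<in> {..<?d}"
    show "(lam r)\<^sup>2 * (u i \<bullet> z)\<^sup>2 \<le> (lam i * (u i \<bullet> z))\<^sup>2"
    proof (cases "i \<le> r")
      case True
      then have "(lam r)\<^sup>2 \<le> (lam i)\<^sup>2"
        using eig r unfolding ordered_eigendecomp_def by (auto simp: abs_le_square_iff)
      then show ?thesis by (simp add: power_mult_distrib mult_right_mono)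
    qed (use coeff i in simp)
  qed
  also have "\<dots> = (norm (A *v z))\<^sup>2"
    unfolding ordered_eigendecomp_mult[OF eig]
    by (rule norm_sum_orthonormal_sq[OF on, symmetric]) auto
  finally have "\<bar>lam r\<bar> * norm z \<le> norm ((A - B) *v z)"
    using Bz by (auto simp: matrix_vector_mult_diff_rdistrib intro: power2_le_imp_le)
  also have "\<dots> \<le> spec_norm (A - B) * norm z"
    by (rule norm_matrix_vector_mult_le_spec_norm)
  finally show ?thesis using z0 by simp
qed

definition lowrank_dist :: "nat \<Rightarrow> real^'n^'n \<Rightarrow> real" where
  "lowrank_dist r A = Inf ((\<lambda>B. spec_norm (A - B)) ` {B. dim (range ((*v) B)) \<le> r})"

lemma lowrank_dist_le:
  "dim (range ((*v) B)) \<le> r \<Longrightarrow> lowrank_dist r A \<le> spec_norm (A - B)"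
  unfolding lowrank_dist_def
  by (rule cInf_lower) (auto intro: bdd_belowI[of _ 0] simp: spec_norm_nonneg)

lemma lowrank_dist_greatest:
  fixes A :: "real^'n^'n"
  assumes "\<And>B. dim (range ((*v) B)) \<le> r \<Longrightarrow> c \<le> spec_norm (A - B)"
  shows "c \<le> lowrank_dist r A"
proof -
  have "dim (range ((*v) (0::real^'n^'n))) \<le> r" by simp
  then show ?thesis
    unfolding lowrank_dist_def using assms by (intro cInf_greatest) blast+
qed

lemma lowrank_dist_nonneg: "0 \<le> lowrank_dist r A"
  by (rule lowrank_dist_greatest) (rule spec_norm_nonneg)

lemma lowrank_dist_le_spec_norm: "lowrank_dist r A \<le> spec_norm A"
  using lowrank_dist_le[of 0 r A] by simp

lemma lowrank_dist_ordered_eigendecomp: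
  fixes A :: "real^'n^'n"
  assumes eig: "ordered_eigendecomp A lam u" and r: "r < CARD('n)"
  shows "lowrank_dist r A = \<bar>lam r\<bar>"
proof (rule antisym)
  have "spec_norm (A - trunc_spec r lam u) \<le> \<bar>lam r\<bar>"
    unfolding spec_norm_def
    by (rule onorm_le)
       (metis norm_trunc_spec_error[OF eig r] matrix_vector_mult_diff_rdistrib norm_minus_commute)
  then show "lowrank_dist r A \<le> \<bar>lam r\<bar>"
    using lowrank_dist_le[OF dim_range_trunc_spec] by (rule order_trans[rotated])
  show "\<bar>lam r\<bar> \<le> lowrank_dist r A"
    by (rule lowrank_dist_greatest) (rule abs_ordered_eigenvalue_le_spec_norm_diff[OF eig r])
qed

lemma lowrank_dist_le_add_spec_norm_diff:
  "lowrank_dist r A \<le> lowrank_dist r A' + spec_norm (A - A')" for A A' :: "real^'n^'n"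
proof -
  have "lowrank_dist r A - spec_norm (A - A') \<le> lowrank_dist r A'"
  proof (rule lowrank_dist_greatest)
    fix B :: "real^'n^'n" assume "dim (range ((*v) B)) \<le> r"
    then have "lowrank_dist r A \<le> spec_norm ((A' - B) + (A - A'))"
      using lowrank_dist_le by simp
    also have "\<dots> \<le> spec_norm (A' - B) + spec_norm (A - A')"
      by (rule spec_norm_triangle)
    finally show "lowrank_dist r A - spec_norm (A - A') \<le> spec_norm (A' - B)" by simp
  qed
  then show ?thesis by simp
qed

lemma continuous_on_lowrank_dist: "continuous_on UNIV (lowrank_dist r :: real^'n^'n \<Rightarrow> real)"
proof (rule lipschitz_on_continuous_on)
  show "(real CARD('n) * real CARD('n))-lipschitz_on UNIV (lowrank_dist r :: real^'n^'n \<Rightarrow> real)"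
  proof (rule lipschitz_onI)
    fix A A' :: "real^'n^'n"
    show "dist (lowrank_dist r A) (lowrank_dist r A') \<le> real CARD('n) * real CARD('n) * dist A A'"
      using lowrank_dist_le_add_spec_norm_diff[of r A A']
        lowrank_dist_le_add_spec_norm_diff[of r A' A]
        spec_norm_le_norm[of "A - A'"] spec_norm_le_norm[of "A' - A"]
      by (simp add: dist_real_def dist_norm norm_minus_commute abs_le_iff)
  qed simp
qed

lemma bounded_linear_inner_matrix_vector_mult: "bounded_linear (\<lambda>A::real^'n^'m. x \<bullet> (A *v y))"
  by (rule bounded_linear_compose[OF bounded_linear_inner_right
        bounded_linear_matrix_vector_mult_left])

lemma
  fixes f :: "'a \<Rightarrow> 'b::{banach, second_countable_topology}"
  assumes M: "\<And>i. i \<in> I \<Longrightarrow> prob_space (M i)" and i: "i \<in> I" and f: "integrable (M i) f"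
  shows integrable_PiM_component: "integrable (PiM I M) (\<lambda>s. f (s i))"
    and integral_PiM_component: "(\<integral>s. f (s i) \<partial>PiM I M) = (\<integral>z. f z \<partial>M i)"
proof -
  have distr: "distr (PiM I M) (M i) (\<lambda>s. s i) = M i"
    by (rule distr_PiM_component[OF M i])
  have meas: "(\<lambda>s. s i) \<in> measurable (PiM I M) (M i)"
    by (rule measurable_component_singleton[OF i])
  have fm: "f \<in> borel_measurable (M i)" using f by auto
  show "integrable (PiM I M) (\<lambda>s. f (s i))"
    using integrable_distr_eq[OF meas fm] f distr by simp
  show "(\<integral>s. f (s i) \<partial>PiM I M) = (\<integral>z. f z \<partial>M i)"
    using integral_distr[OF meas fm] distr by simp
qed

lemma indep_vars_PiM_components:
  assumes M: "\<And>i. i \<in> I \<Longrightarrow> prob_space (M i)" and I: "I \<noteq> {}"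
  shows "prob_space.indep_vars (PiM I M) M (\<lambda>i s. s i) I"
proof -
  interpret P: prob_space "PiM I M" by (rule prob_space_PiM[OF M])
  have rv: "(\<lambda>s. s i) \<in> measurable (PiM I M) (M i)" if "i \<in> I" for i
    by (rule measurable_component_singleton[OF that])
  have "distr (PiM I M) (PiM I M) (\<lambda>s. \<lambda>i\<in>I. s i) = distr (PiM I M) (PiM I M) (\<lambda>s. s)"
    by (rule distr_cong) (auto simp: space_PiM PiE_def extensional_def restrict_def fun_eq_iff)
  also have "\<dots> = PiM I M"
    by (rule distr_id)
  also have "\<dots> = PiM I (\<lambda>i. distr (PiM I M) (M i) (\<lambda>s. s i))"
    by (rule PiM_cong) (auto intro!: distr_PiM_component[symmetric] M)
  finally show ?thesis
    by (subst P.indep_vars_iff_distr_eq_PiM'[OF I rv]) auto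
qed

lemma
  fixes f g :: "'a \<Rightarrow> real"
  assumes M: "prob_space M" and ij: "i \<in> I" "j \<in> I" "i \<noteq> j"
    and f: "integrable M f" and g: "integrable M g"
  shows integrable_PiM_components_mult: "integrable (PiM I (\<lambda>_. M)) (\<lambda>s. f (s i) * g (s j))"
    and integral_PiM_components_mult:
      "(\<integral>s. f (s i) * g (s j) \<partial>PiM I (\<lambda>_. M)) = (\<integral>z. f z \<partial>M) * (\<integral>z. g z \<partial>M)"
proof -
  interpret P: prob_space "PiM I (\<lambda>_. M)" by (rule prob_space_PiM) (rule M)
  define h where "h k = (if k = i then f else g)" for k
  have "P.indep_vars (\<lambda>_. M) (\<lambda>k s. s k) {i, j}"
    by (rule P.indep_vars_subset[OF indep_vars_PiM_components]) (use M ij in auto)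
  then have indep: "P.indep_vars (\<lambda>_. borel) (\<lambda>k s. h k (s k)) {i, j}"
    by (rule P.indep_vars_compose2) (simp add: h_def borel_measurable_integrable f g)
  have int: "integrable (PiM I (\<lambda>_. M)) (\<lambda>s. h k (s k))" if "k \<in> {i, j}" for k
    using that ij by (auto simp: h_def intro: integrable_PiM_component M f g)
  have prod: "(\<Prod>k\<in>{i, j}. h k (s k)) = f (s i) * g (s j)" for s
    using ij by (simp add: h_def)
  show "integrable (PiM I (\<lambda>_. M)) (\<lambda>s. f (s i) * g (s j))"
    using P.indep_vars_integrable[OF _ indep int] by (simp add: prod)
  show "(\<integral>s. f (s i) * g (s j) \<partial>PiM I (\<lambda>_. M)) = (\<integral>z. f z \<partial>M) * (\<integral>z. g z \<partial>M)"
    using P.indep_vars_lebesgue_integral[OF _ indep int] ij M f g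
    by (simp add: prod h_def integral_PiM_component)
qed

lemma
  fixes f :: "'a \<Rightarrow> 'b::euclidean_space"
  assumes M: "prob_space M" and I: "finite I"
    and f: "integrable M f" "(\<integral>z. f z \<partial>M) = 0" and f2: "integrable M (\<lambda>z. (norm (f z))\<^sup>2)"
  shows integrable_norm_sum_PiM_components_sq:
      "integrable (PiM I (\<lambda>_. M)) (\<lambda>s. (norm (\<Sum>i\<in>I. f (s i)))\<^sup>2)"
    and integral_norm_sum_PiM_components_sq:
      "(\<integral>s. (norm (\<Sum>i\<in>I. f (s i)))\<^sup>2 \<partial>PiM I (\<lambda>_. M)) = card I * (\<integral>z. (norm (f z))\<^sup>2 \<partial>M)"
proof -
  let ?P = "PiM I (\<lambda>_. M)"
  have cross: "integrable ?P (\<lambda>s. f (s i) \<bullet> f (s j)) \<and> (\<integral>s. f (s i) \<bullet> f (s j) \<partial>?P) = 0"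
    if ij: "i \<in> I" "j \<in> I" "i \<noteq> j" for i j
  proof -
    have fb: "integrable M (\<lambda>z. f z \<bullet> b)" "(\<integral>z. f z \<bullet> b \<partial>M) = 0" for b
      using f by simp_all
    have "f (s i) \<bullet> f (s j) = (\<Sum>b\<in>Basis. (f (s i) \<bullet> b) * (f (s j) \<bullet> b))" for s
      by (rule euclidean_inner)
    then show ?thesis
      using integrable_PiM_components_mult[OF M ij fb(1) fb(1)]
        integral_PiM_components_mult[OF M ij fb(1) fb(1)] fb(2)
      by simp
  qed
  have diag: "integrable ?P (\<lambda>s. f (s i) \<bullet> f (s i)) \<and>
      (\<integral>s. f (s i) \<bullet> f (s i) \<partial>?P) = (\<integral>z. (norm (f z))\<^sup>2 \<partial>M)" if "i \<in> I" for i
    using integrable_PiM_component[OF M that f2] integral_PiM_component[OF M that f2]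
    by (simp add: power2_norm_eq_inner)
  have summand: "integrable ?P (\<lambda>s. f (s i) \<bullet> f (s j)) \<and>
      (\<integral>s. f (s i) \<bullet> f (s j) \<partial>?P) = (if i = j then \<integral>z. (norm (f z))\<^sup>2 \<partial>M else 0)"
    if "i \<in> I" "j \<in> I" for i j
    using cross diag that by auto
  have expand: "(norm (\<Sum>i\<in>I. f (s i)))\<^sup>2 = (\<Sum>i\<in>I. \<Sum>j\<in>I. f (s i) \<bullet> f (s j))" for s
    by (simp add: power2_norm_eq_inner inner_sum_left inner_sum_right) (rule sum.swap)
  show "integrable ?P (\<lambda>s. (norm (\<Sum>i\<in>I. f (s i)))\<^sup>2)"
    unfolding expand using summand by (auto intro!: Bochner_Integration.integrable_sum)
  have "(\<integral>s. (norm (\<Sum>i\<in>I. f (s i)))\<^sup>2 \<partial>?P) = (\<Sum>i\<in>I. \<Sum>j\<in>I. \<integral>s. f (s i) \<bullet> f (s j) \<partial>?P)"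
    unfolding expand using summand
    by (simp add: Bochner_Integration.integral_sum Bochner_Integration.integrable_sum)
  also have "\<dots> = card I * (\<integral>z. (norm (f z))\<^sup>2 \<partial>M)"
    using summand I by simp
  finally show "(\<integral>s. (norm (\<Sum>i\<in>I. f (s i)))\<^sup>2 \<partial>?P) = card I * (\<integral>z. (norm (f z))\<^sup>2 \<partial>M)" .
qed

lemma (in prob_space) square_integral_le_integral_square:
  fixes X :: "'a \<Rightarrow> real"
  assumes "integrable M X" "integrable M (\<lambda>x. (X x)\<^sup>2)"
  shows "(\<integral>x. X x \<partial>M)\<^sup>2 \<le> (\<integral>x. (X x)\<^sup>2 \<partial>M)"
  using variance_eq[OF assms] variance_positive[of X] by simp

lemma integral_norm_mean_PiM_components_le:
  fixes f :: "'a \<Rightarrow> 'b::euclidean_space"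
  assumes M: "prob_space M" and N: "N \<ge> 1"
    and f: "integrable M f" "(\<integral>z. f z \<partial>M) = 0" and f2: "integrable M (\<lambda>z. (norm (f z))\<^sup>2)"
  shows "(\<integral>s. norm ((1 / real N) *\<^sub>R (\<Sum>i<N. f (s i))) \<partial>PiM {..<N} (\<lambda>_. M))
           \<le> sqrt (\<integral>z. (norm (f z))\<^sup>2 \<partial>M) / sqrt (real N)"
proof -
  let ?P = "PiM {..<N} (\<lambda>_. M)"
  interpret P: prob_space ?P by (rule prob_space_PiM) (rule M)
  have int: "integrable ?P (\<lambda>s. norm (\<Sum>i<N. f (s i)))"
    using f by (auto intro!: integrable_norm Bochner_Integration.integrable_sum
        integrable_PiM_component M)
  have "(\<integral>s. norm (\<Sum>i<N. f (s i)) \<partial>?P)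
      \<le> sqrt (\<integral>s. (norm (\<Sum>i<N. f (s i)))\<^sup>2 \<partial>?P)"
    using P.square_integral_le_integral_square[OF int
        integrable_norm_sum_PiM_components_sq[OF M _ f f2]]
    by (intro real_le_rsqrt) simp
  also have "\<dots> = sqrt (real N) * sqrt (\<integral>z. (norm (f z))\<^sup>2 \<partial>M)"
    by (simp add: integral_norm_sum_PiM_components_sq[OF M _ f f2] real_sqrt_mult)
  finally have "(\<integral>s. norm (\<Sum>i<N. f (s i)) \<partial>?P) / real N
      \<le> sqrt (real N) * sqrt (\<integral>z. (norm (f z))\<^sup>2 \<partial>M) / real N"
    by (rule divide_right_mono) simp
  also have "\<dots> = sqrt (\<integral>z. (norm (f z))\<^sup>2 \<partial>M) / sqrt (real N)"
  proof -
    define t where "t = sqrt (real N)"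
    have "0 < t" "real N = t * t" using N by (simp_all add: t_def)
    then show ?thesis unfolding t_def[symmetric] by (simp add: field_simps)
  qed
  finally show ?thesis
    by simp
qed

lemma
  fixes D :: "'a \<Rightarrow> real^'n^'n"
  assumes sym: "\<And>z x y. z \<in> space M \<Longrightarrow> x \<bullet> (D z *v y) = y \<bullet> (D z *v x)"
    and DD: "integrable M (\<lambda>z. D z ** D z)"
  shows integrable_norm_matrix_vector_mult_sq: "integrable M (\<lambda>z. (norm (D z *v v))\<^sup>2)"
    and integral_norm_matrix_vector_mult_sq_le:
      "(\<integral>z. (norm (D z *v v))\<^sup>2 \<partial>M) \<le> spec_norm (\<integral>z. D z ** D z \<partial>M) * (norm v)\<^sup>2"
proof -
  note bl = bounded_linear_inner_matrix_vector_mult[of v v]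
  have eq: "(norm (D z *v v))\<^sup>2 = v \<bullet> ((D z ** D z) *v v)" if "z \<in> space M" for z
    using sym[OF that, of v "D z *v v"]
    by (simp add: power2_norm_eq_inner matrix_vector_mul_assoc)
  show "integrable M (\<lambda>z. (norm (D z *v v))\<^sup>2)"
    using integrable_bounded_linear[OF bl DD]
    by (subst Bochner_Integration.integrable_cong[OF refl eq]) auto
  have "(\<integral>z. (norm (D z *v v))\<^sup>2 \<partial>M) = v \<bullet> ((\<integral>z. D z ** D z \<partial>M) *v v)"
    using integral_bounded_linear[OF bl DD]
    by (simp add: Bochner_Integration.integral_cong[OF refl eq])
  also have "\<dots> \<le> norm v * norm ((\<integral>z. D z ** D z \<partial>M) *v v)"
    by (rule norm_cauchy_schwarz)
  also have "\<dots> \<le> norm v * (spec_norm (\<integral>z. D z ** D z \<partial>M) * norm v)"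
    by (rule mult_left_mono[OF norm_matrix_vector_mult_le_spec_norm]) simp
  finally show "(\<integral>z. (norm (D z *v v))\<^sup>2 \<partial>M) \<le> spec_norm (\<integral>z. D z ** D z \<partial>M) * (norm v)\<^sup>2"
    by (simp add: power2_eq_square mult_ac)
qed

lemma integrable_abs_ordered_eigenvalue:
  fixes A :: "'a \<Rightarrow> real^'n^'n"
  assumes A: "integrable M A" and r: "r < CARD('n)"
    and eig: "\<And>s. s \<in> space M \<Longrightarrow> ordered_eigendecomp (A s) (lam s) (U s)"
  shows "integrable M (\<lambda>s. \<bar>lam s r\<bar>)"
proof -
  have "integrable M (\<lambda>s. lowrank_dist r (A s))"
  proof (rule Bochner_Integration.integrable_bound)
    show "integrable M (\<lambda>s. real CARD('n) * real CARD('n) * norm (A s))"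
      using A by auto
    show "(\<lambda>s. lowrank_dist r (A s)) \<in> borel_measurable M"
      using borel_measurable_integrable[OF A]
      by (rule measurable_compose[OF _
            borel_measurable_continuous_onI[OF continuous_on_lowrank_dist]])
    show "AE s in M. norm (lowrank_dist r (A s))
        \<le> norm (real CARD('n) * real CARD('n) * norm (A s))"
    proof (rule AE_I2)
      fix s
      show "norm (lowrank_dist r (A s)) \<le> norm (real CARD('n) * real CARD('n) * norm (A s))"
        using lowrank_dist_nonneg[of r "A s"] lowrank_dist_le_spec_norm[of r "A s"]
          spec_norm_le_norm[of "A s"]
        by simp
    qed
  qed
  then show ?thesis
    by (rule Bochner_Integration.integrable_cong[OF refl, THEN iffD1, rotated])
       (simp add: lowrank_dist_ordered_eigendecomp[OF eig r])
qed

lemma integral_norm_trunc_spec_diff_le: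
  fixes A :: "'a \<Rightarrow> real^'n^'n"
  assumes M: "finite_measure M" and A: "integrable M A" and r: "r < CARD('n)"
    and eig: "\<And>s. s \<in> space M \<Longrightarrow> ordered_eigendecomp (A s) (lam s) (U s)"
  shows "(\<integral>s. norm ((trunc_spec r (lam s) (U s) - H) *v v) \<partial>M)
           \<le> (\<integral>s. \<bar>lam s r\<bar> \<partial>M) * norm v + (\<integral>s. norm ((A s - H) *v v) \<partial>M)"
proof -
  interpret finite_measure M by (rule M)
  have lam_int: "integrable M (\<lambda>s. \<bar>lam s r\<bar>)"
    by (rule integrable_abs_ordered_eigenvalue[OF A r eig])
  have dev_int: "integrable M (\<lambda>s. norm ((A s - H) *v v))"
    using A
    by (intro integrable_norm integrable_bounded_linear[OF bounded_linear_matrix_vector_mult_left])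
       auto
  have "(\<integral>s. norm ((trunc_spec r (lam s) (U s) - H) *v v) \<partial>M)
      \<le> (\<integral>s. \<bar>lam s r\<bar> * norm v + norm ((A s - H) *v v) \<partial>M)"
  proof (rule integral_mono')
    show "integrable M (\<lambda>s. \<bar>lam s r\<bar> * norm v + norm ((A s - H) *v v))"
      using lam_int dev_int by simp
    fix s assume s: "s \<in> space M"
    have "norm ((trunc_spec r (lam s) (U s) - H) *v v)
        \<le> norm ((trunc_spec r (lam s) (U s) - A s) *v v) + norm ((A s - H) *v v)"
      using norm_triangle_ineq[of "(trunc_spec r (lam s) (U s) - A s) *v v" "(A s - H) *v v"]
      by (simp add: matrix_vector_mult_diff_rdistrib)
    also have "\<dots> \<le> \<bar>lam s r\<bar> * norm v + norm ((A s - H) *v v)"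
      using norm_trunc_spec_error[OF eig[OF s] r] by simp
    finally show "norm ((trunc_spec r (lam s) (U s) - H) *v v)
        \<le> \<bar>lam s r\<bar> * norm v + norm ((A s - H) *v v)" .
  qed simp
  also have "\<dots> = (\<integral>s. \<bar>lam s r\<bar> \<partial>M) * norm v + (\<integral>s. norm ((A s - H) *v v) \<partial>M)"
    using lam_int dev_int by simp
  finally show ?thesis .
qed

lemma sample_hess_restrict_const: "n \<ge> 1 \<Longrightarrow> sample_hess hess n (\<lambda>i\<in>{..<n}. z) w = hess z w"
  by (simp add: sample_hess_def sum_constant_scaleR del: sum_constant)

lemma sample_hess_minus:
  "n \<ge> 1 \<Longrightarrow> sample_hess hess n s w - H = (1 / real n) *\<^sub>R (\<Sum>i<n. hess (s i) w - H)"
  by (simp add: sample_hess_def sum_subtractf scaleR_diff_right sum_constant_scaleR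
      del: sum_constant)

lemma integrable_sample_hess:
  assumes "prob_space M" "integrable M (\<lambda>z. hess z w)"
  shows "integrable (PiM {..<n} (\<lambda>_. M)) (\<lambda>s. sample_hess hess n s w)"
  unfolding sample_hess_def using assms by (auto intro!: integrable_PiM_component)

lemma integral_norm_sample_hess_deviation_le:
  fixes hess :: "'z \<Rightarrow> real^'n \<Rightarrow> real^'n^'n"
  assumes M: "prob_space M" and N: "N \<ge> 1" and \<sigma>: "0 \<le> \<sigma>"
    and int: "integrable M (\<lambda>z. hess z w)" and mean: "H = (\<integral>z. hess z w \<partial>M)"
    and sym: "\<And>z x y. z \<in> space M \<Longrightarrow> x \<bullet> (hess z w *v y) = y \<bullet> (hess z w *v x)"
    and var_int: "integrable M (\<lambda>z. (hess z w - H) ** (hess z w - H))"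
    and var: "spec_norm (\<integral>z. (hess z w - H) ** (hess z w - H) \<partial>M) \<le> \<sigma>\<^sup>2"
  shows "(\<integral>s. norm ((sample_hess hess N s w - H) *v v) \<partial>PiM {..<N} (\<lambda>_. M))
           \<le> \<sigma> / sqrt (real N) * norm v"
proof -
  interpret prob_space M by (rule M)
  define D where "D z = hess z w - H" for z
  have "x \<bullet> (H *v y) = y \<bullet> (H *v x)" for x y
    unfolding mean
      integral_bounded_linear[OF bounded_linear_inner_matrix_vector_mult int, symmetric]
    using sym by (simp cong: Bochner_Integration.integral_cong)
  then have D_sym: "x \<bullet> (D z *v y) = y \<bullet> (D z *v x)" if "z \<in> space M" for z x y
    using sym[OF that] by (simp add: D_def matrix_vector_mult_diff_rdistrib inner_diff_right)
  have D_int: "integrable M D"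
    unfolding D_def[abs_def] using int by simp
  have Dv_int: "integrable M (\<lambda>z. D z *v v)"
    by (rule integrable_bounded_linear[OF bounded_linear_matrix_vector_mult_left D_int])
  have "(\<integral>z. D z \<partial>M) = 0"
    unfolding D_def Bochner_Integration.integral_diff[OF int integrable_const]
    by (simp add: mean prob_space)
  then have Dv_mean: "(\<integral>z. D z *v v \<partial>M) = 0"
    using integral_bounded_linear[OF bounded_linear_matrix_vector_mult_left D_int] by simp
  have "(\<integral>s. norm ((sample_hess hess N s w - H) *v v) \<partial>PiM {..<N} (\<lambda>_. M))
      = (\<integral>s. norm ((1 / real N) *\<^sub>R (\<Sum>i<N. D (s i) *v v)) \<partial>PiM {..<N} (\<lambda>_. M))"
    by (simp add: sample_hess_minus[OF N] D_def scaleR_matrix_vector_assoc[symmetric]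
        linear_sum[OF bounded_linear.linear[OF bounded_linear_matrix_vector_mult_left]])
  also have "\<dots> \<le> sqrt (\<integral>z. (norm (D z *v v))\<^sup>2 \<partial>M) / sqrt (real N)"
    using var_int unfolding D_def[symmetric]
    by (intro integral_norm_mean_PiM_components_le M N Dv_int Dv_mean
        integrable_norm_matrix_vector_mult_sq D_sym)
  also have "\<dots> \<le> sqrt (\<sigma>\<^sup>2 * (norm v)\<^sup>2) / sqrt (real N)"
  proof (intro divide_right_mono real_sqrt_le_mono)
    have "(\<integral>z. (norm (D z *v v))\<^sup>2 \<partial>M) \<le> spec_norm (\<integral>z. D z ** D z \<partial>M) * (norm v)\<^sup>2"
      using integral_norm_matrix_vector_mult_sq_le[of M D, OF D_sym] var_int
      by (simp add: D_def)
    also have "\<dots> \<le> \<sigma>\<^sup>2 * (norm v)\<^sup>2"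
      using var unfolding D_def[symmetric] by (rule mult_right_mono) simp
    finally show "(\<integral>z. (norm (D z *v v))\<^sup>2 \<partial>M) \<le> \<sigma>\<^sup>2 * (norm v)\<^sup>2" .
  qed simp
  also have "\<dots> = \<sigma> / sqrt (real N) * norm v"
    using \<sigma> by (simp add: real_sqrt_mult)
  finally show ?thesis .
qed

theorem lemmaA4:
  fixes \<nu> :: "'z measure"
    and loss :: "real^'n \<Rightarrow> 'z \<Rightarrow> real"
    and hess :: "'z \<Rightarrow> real^'n \<Rightarrow> real^'n^'n"
    and F :: "real^'n \<Rightarrow> real"
    and HF :: "real^'n \<Rightarrow> real^'n^'n"
    and L :: real and LN :: "nat \<Rightarrow> real" and \<sigma> \<gamma> :: real
    and N r :: nat
    and wk wstar :: "real^'n"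
    and lam :: "(nat \<Rightarrow> 'z) \<Rightarrow> nat \<Rightarrow> real"
    and U :: "(nat \<Rightarrow> 'z) \<Rightarrow> nat \<Rightarrow> real^'n"
  assumes prob: "prob_space \<nu>"
    and loss_int: "\<And>w. integrable \<nu> (\<lambda>z. loss w z)"
    and F_def: "\<And>w. F w = (\<integral>z. loss w z \<partial>\<nu>)"
    and hess_l: "\<And>z w. hessian_at (\<lambda>v. loss v z) w (hess z w)"
    and hess_F: "\<And>w. hessian_at F w (HF w)"
    and hess_F_cont: "continuous_on UNIV HF"
    and hess_int: "\<And>w. integrable \<nu> (\<lambda>z. hess z w)"
    and hess_interchange: "\<And>w. HF w = (\<integral>z. hess z w \<partial>\<nu>)"
    \<comment> \<open>(A1) upper bound on sample Hessians\<close>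
    and A1_bound: "\<And>n s w. n \<ge> 1 \<Longrightarrow> (\<forall>i<n. s i \<in> space \<nu>) \<Longrightarrow>
        LN n < L \<and> loewner_le (sample_hess hess n s w) (LN n *\<^sub>R mat 1)"
    \<comment> \<open>(A4) variance bound\<close>
    and A4_int: "\<And>w. integrable \<nu> (\<lambda>z. (hess z w - HF w) ** (hess z w - HF w))"
    and A4: "\<And>w. spec_norm (\<integral>z. (hess z w - HF w) ** (hess z w - HF w) \<partial>\<nu>) \<le> \<sigma>\<^sup>2"
    and sigma_nonneg: "0 \<le> \<sigma>"
    and gamma_pos: "\<gamma> > 0"
    and N_pos: "N \<ge> 1"
    and r_lt: "r < CARD('n)"
    \<comment> \<open>ordered eigendecomposition of the sample Hessian at w_k, for every sample\<close>
    and eig: "\<And>s. s \<in> space (PiM {..<N} (\<lambda>_. \<nu>)) \<Longrightarrow>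
        ordered_eigendecomp (sample_hess hess N s wk) (lam s) (U s)"
    \<comment> \<open>(A1) the first r eigenvalues at the iterate are positive\<close>
    and A1_pos: "\<And>s i. s \<in> space (PiM {..<N} (\<lambda>_. \<nu>)) \<Longrightarrow> i < r \<Longrightarrow> lam s i > 0"
  shows "(\<integral>s. norm (((trunc_spec r (lam s) (U s) + \<gamma> *\<^sub>R mat 1) - (HF wk + \<gamma> *\<^sub>R mat 1))
                       *v (wk - wstar)) \<partial>(PiM {..<N} (\<lambda>_. \<nu>)))
         \<le> ((\<integral>s. \<bar>lam s r\<bar> \<partial>(PiM {..<N} (\<lambda>_. \<nu>))) + \<gamma> + \<sigma> / sqrt (real N)) * norm (wk - wstar)"
proof -
  let ?M = "PiM {..<N} (\<lambda>_. \<nu>)" and ?v = "wk - wstar"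
  interpret P: prob_space ?M by (rule prob_space_PiM) (rule prob)
  \<comment> \<open>Symmetry is not assumed: hess z wk is the sample Hessian of the sample (z, ..., z).\<close>
  have sym: "x \<bullet> (hess z wk *v y) = y \<bullet> (hess z wk *v x)" if "z \<in> space \<nu>" for z x y
  proof -
    have "(\<lambda>i\<in>{..<N}. z) \<in> space ?M"
      using that by (simp add: space_PiM)
    from ordered_eigendecomp_symmetric[OF eig[OF this]] show ?thesis
      by (simp add: sample_hess_restrict_const[OF N_pos])
  qed
  have "(\<integral>s. norm (((trunc_spec r (lam s) (U s) + \<gamma> *\<^sub>R mat 1) - (HF wk + \<gamma> *\<^sub>R mat 1)) *v ?v) \<partial>?M)
      = (\<integral>s. norm ((trunc_spec r (lam s) (U s) - HF wk) *v ?v) \<partial>?M)"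
    by simp
  also have "\<dots> \<le> (\<integral>s. \<bar>lam s r\<bar> \<partial>?M) * norm ?v
      + (\<integral>s. norm ((sample_hess hess N s wk - HF wk) *v ?v) \<partial>?M)"
    by (rule integral_norm_trunc_spec_diff_le[OF P.finite_measure_axioms
          integrable_sample_hess[OF prob hess_int] r_lt eig])
  also have "\<dots> \<le> (\<integral>s. \<bar>lam s r\<bar> \<partial>?M) * norm ?v + \<sigma> / sqrt (real N) * norm ?v"
    using integral_norm_sample_hess_deviation_le[where hess = hess and w = wk,
        OF prob N_pos sigma_nonneg hess_int hess_interchange sym A4_int A4]
    by simp
  also have "\<dots> \<le> ((\<integral>s. \<bar>lam s r\<bar> \<partial>?M) + \<gamma> + \<sigma> / sqrt (real N)) * norm ?v"
    using gamma_pos by (simp add: distrib_right)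
  finally show ?thesis .
qed

end
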